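(* Let $M_G$ be a connected mixed graph such that $N(M_G)$ has rank $2$. Then $M_G$ is switching equivalent to every connected mixed graph that is cospectral with $M_G$.
   Context: A mixed graph $M_G$ is obtained from a finite simple graph $G$ by orienting the edges of some subset of $E(G)$; it is connected if $G$ is. With $\omega=\frac{1+\mathbf{i}\sqrt3}{2}$, $N(M_G)$ has $(u,v)$-entry $\omega$ if $\overrightarrow{uv}$ is an arc, $\bar\omega$ if $\overrightarrow{vu}$ is an arc, $1$ for an undirected edge, $0$ otherwise; cospectral means the matrices $N$ have the same multiset of eigenvalues. Mixed graphs are considered up to isomorphism. $\mathbb{T}_6=\{1,-1,\omega,\bar\omega,-\omega,-\bar\omega\}$. Given a partition $V(M_G)=\bigcup_{j\in\mathbb{T}_6}V_j$ into six possibly empty sets, an edge or arc $xy$ has type $(j,k)$ if $x\in V_j,y\in V_k$ (arcs directed from $x$ to $y$). The partition is admissible if every undirected edge has type $(j,j)$ or $(j,\omega j)$, and every arc has type $(j,j)$, $(j,\bar\omega j)$ or $(j,-\omega j)$, for some $j$. A three-way switching w.r.t. an admissible partition replaces each undirected edge of type $(j,\omega j)$ by an arc from $V_j$ to $V_{\omega j}$, replaces each arc of type $(j,\bar\omega j)$ by an undirected edge, and reverses each arc of type $(j,-\omega j)$. The converse of a mixed graph reverses all arcs. Two mixed graphs are switching equivalent if one is obtained from the other by a sequence of three-way switchings and taking converses. *)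

theory Defs
  imports "Jordan_Normal_Form.Char_Poly" "Jordan_Normal_Form.DL_Rank"
begin

text \<open>A mixed graph on the vertex set {0..<nv}: a symmetric irreflexive set of ordered
  pairs representing the undirected edges (each undirected edge {u,v} is stored as both
  (u,v) and (v,u)), and a set of arcs (u,v) meaning the arc from u to v.\<close>

record mgraph =
  nv  :: nat
  und :: "(nat \<times> nat) set"
  arc :: "(nat \<times> nat) set"

definition mixed_graph :: "mgraph \<Rightarrow> bool" where
  "mixed_graph G \<longleftrightarrow>
     und G \<subseteq> {..<nv G} \<times> {..<nv G} \<and> arc G \<subseteq> {..<nv G} \<times> {..<nv G} \<and>
     (\<forall>x y. (x,y) \<in> und G \<longrightarrow> (y,x) \<in> und G \<and> x \<noteq> y) \<and>
     (\<forall>x y. (x,y) \<in> arc G \<longrightarrow> x \<noteq> y \<and> (y,x) \<notin> arc G \<and> (x,y) \<notin> und G)"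

definition underlying_adj :: "mgraph \<Rightarrow> nat \<Rightarrow> nat \<Rightarrow> bool" where
  "underlying_adj G x y \<longleftrightarrow> (x,y) \<in> und G \<or> (x,y) \<in> arc G \<or> (y,x) \<in> arc G"

definition connected_mg :: "mgraph \<Rightarrow> bool" where
  "connected_mg G \<longleftrightarrow> (\<forall>x<nv G. \<forall>y<nv G. (underlying_adj G)\<^sup>*\<^sup>* x y)"

definition omega :: complex where
  "omega = (1 + \<i> * complex_of_real (sqrt 3)) / 2"

definition Nmat :: "mgraph \<Rightarrow> complex mat" where
  "Nmat G = mat (nv G) (nv G) (\<lambda>(u,v).
     if (u,v) \<in> arc G then omega
     else if (v,u) \<in> arc G then cnj omega
     else if (u,v) \<in> und G then 1 else 0)"

definition eigenvalue_mset :: "complex mat \<Rightarrow> complex multiset" where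
  "eigenvalue_mset A = proots (char_poly A)"

definition cospectral :: "mgraph \<Rightarrow> mgraph \<Rightarrow> bool" where
  "cospectral G H \<longleftrightarrow> eigenvalue_mset (Nmat G) = eigenvalue_mset (Nmat H)"

definition rank_N :: "mgraph \<Rightarrow> nat" where
  "rank_N G = vec_space.rank (nv G) (Nmat G)"

definition T6 :: "complex set" where
  "T6 = {1, -1, omega, cnj omega, - omega, - cnj omega}"

text \<open>A partition of the vertex set into V_j (j in T6) is given by the map p with x in V_(p x).\<close>
definition admissible :: "mgraph \<Rightarrow> (nat \<Rightarrow> complex) \<Rightarrow> bool" where
  "admissible G p \<longleftrightarrow>
     (\<forall>x<nv G. p x \<in> T6) \<and>
     (\<forall>(x,y)\<in>und G. p y = p x \<or> p y = omega * p x \<or> p x = omega * p y) \<and>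
     (\<forall>(x,y)\<in>arc G. p y = p x \<or> p y = cnj omega * p x \<or> p y = - omega * p x)"

definition three_way_switch :: "mgraph \<Rightarrow> (nat \<Rightarrow> complex) \<Rightarrow> mgraph" where
  "three_way_switch G p =
     \<lparr> nv = nv G,
       und = {(x,y). (x,y) \<in> und G \<and> p y = p x}
             \<union> {(x,y). (x,y) \<in> arc G \<and> p y = cnj omega * p x}
             \<union> {(y,x). (x,y) \<in> arc G \<and> p y = cnj omega * p x},
       arc = {(x,y). (x,y) \<in> arc G \<and> p y = p x}
             \<union> {(x,y). (x,y) \<in> und G \<and> p y = omega * p x}
             \<union> {(y,x). (x,y) \<in> arc G \<and> p y = - omega * p x} \<rparr>"

definition converse_mg :: "mgraph \<Rightarrow> mgraph" where
  "converse_mg G = \<lparr> nv = nv G, und = und G, arc = {(y,x). (x,y) \<in> arc G} \<rparr>"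

definition isomorphic_mg :: "mgraph \<Rightarrow> mgraph \<Rightarrow> bool" where
  "isomorphic_mg G H \<longleftrightarrow> nv G = nv H \<and>
     (\<exists>f. bij_betw f {..<nv G} {..<nv H} \<and>
          (\<forall>x<nv G. \<forall>y<nv G. ((x,y) \<in> und G \<longleftrightarrow> (f x, f y) \<in> und H) \<and>
                               ((x,y) \<in> arc G \<longleftrightarrow> (f x, f y) \<in> arc H)))"

text \<open>One step: isomorphism (graphs are considered up to isomorphism), a three-way
  switching w.r.t. an admissible partition, or taking the converse.\<close>
definition switch_step :: "mgraph \<Rightarrow> mgraph \<Rightarrow> bool" where
  "switch_step G H \<longleftrightarrow> isomorphic_mg G H \<or>
     (\<exists>p. admissible G p \<and> H = three_way_switch G p) \<or> H = converse_mg G"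

definition switching_equivalent :: "mgraph \<Rightarrow> mgraph \<Rightarrow> bool" where
  "switching_equivalent G H \<longleftrightarrow> switch_step\<^sup>*\<^sup>* G H"

end

theory Submission
  imports Defs "Jordan_Normal_Form.DL_Rank_Submatrix" "Jordan_Normal_Form.Schur_Decomposition"
begin

text \<open>Rank two forces every \<open>3 \<times> 3\<close> minor of \<open>N\<close> to vanish. In a connected graph this
  excludes triangles and induced paths on four vertices, so the underlying graph is complete
  bipartite, and the vanishing \<open>2 \<times> 2\<close> minors across the bipartition give
  \<open>N(x,y) = p x * cnj (p y)\<close> for a labelling \<open>p\<close> of the vertices by sixth roots of unity.
  Switching with respect to the partition given by \<open>p\<close> turns the graph into the undirected
  \<open>K\<^sub>a\<^sub>,\<^sub>b\<close>, whose spectrum is \<open>\<plusminus>\<surd>(ab)\<close> and zeros, with \<open>tr N\<^sup>2 = 2ab\<close>.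
  A cospectral \<open>H\<close> thus has eigenvectors \<open>u, v\<close> for \<open>\<plusminus>\<surd>(ab)\<close> and \<open>tr N\<^sub>H\<^sup>2 = 2ab\<close>;
  in the Frobenius norm this forces \<open>N\<^sub>H = \<surd>(ab) (P\<^sub>u - P\<^sub>v)\<close>, so \<open>H\<close> has rank two
  as well and switches to some \<open>K\<^sub>a\<^sub>'\<^sub>,\<^sub>b\<^sub>'\<close>. Since \<open>a' + b' = a + b\<close> and
  \<open>a'b' = ab\<close>, the two complete bipartite graphs are isomorphic.\<close>

lemma cnj_omega_mult_omega [simp]: "cnj omega * omega = 1"
  unfolding omega_def by (simp add: complex_eq_iff power2_eq_square)

lemma omega_mult_cnj_omega [simp]: "omega * cnj omega = 1"
  using cnj_omega_mult_omega by (simp add: mult.commute)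

lemma omega_mult_omega: "omega * omega = - cnj omega"
  unfolding omega_def by (simp add: complex_eq_iff field_simps)

lemma cnj_omega_mult_cnj_omega: "cnj omega * cnj omega = - omega"
  using arg_cong[OF omega_mult_omega, of cnj] by simp

lemma omega_neq [simp]: "omega \<noteq> 0" "omega \<noteq> 1" "cnj omega \<noteq> 1" "omega \<noteq> cnj omega"
  unfolding omega_def by (simp_all add: complex_eq_iff)

definition N_values :: "complex set" where
  "N_values = {1, omega, cnj omega}"

lemma T6_mult_N_values: "z \<in> T6 \<Longrightarrow> w \<in> N_values \<Longrightarrow> z * w \<in> T6"
  unfolding N_values_def T6_def by (auto simp: omega_mult_omega cnj_omega_mult_cnj_omega)

lemma N_values_subset_T6: "N_values \<subseteq> T6"
  unfolding N_values_def T6_def by auto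

lemma T6_cnj: "z \<in> T6 \<Longrightarrow> cnj z \<in> T6"
  unfolding T6_def by auto

lemma T6_cnj_mult_self: "z \<in> T6 \<Longrightarrow> cnj z * z = 1"
  unfolding T6_def by auto

lemma T6_nonzero: "z \<in> T6 \<Longrightarrow> z \<noteq> 0"
  using T6_cnj_mult_self by force

lemma T6_Re_nonzero: "z \<in> T6 \<Longrightarrow> z + cnj z \<noteq> 0"
  unfolding T6_def omega_def by (auto simp: complex_eq_iff)

definition Nent :: "mgraph \<Rightarrow> nat \<Rightarrow> nat \<Rightarrow> complex" where
  "Nent G u v = (if (u,v) \<in> arc G then omega
     else if (v,u) \<in> arc G then cnj omega
     else if (u,v) \<in> und G then 1 else 0)"

lemma Nmat_carrier: "Nmat G \<in> carrier_mat (nv G) (nv G)"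
  unfolding Nmat_def by auto

lemma Nmat_index: "x < nv G \<Longrightarrow> y < nv G \<Longrightarrow> Nmat G $$ (x,y) = Nent G x y"
  unfolding Nmat_def Nent_def by auto

context
  fixes G assumes mg: "mixed_graph G"
begin

lemma und_bounded: "(x,y) \<in> und G \<Longrightarrow> (y,x) \<in> und G \<and> x \<noteq> y \<and> x < nv G \<and> y < nv G"
  using mg unfolding mixed_graph_def by blast

lemma arc_bounded: "(x,y) \<in> arc G \<Longrightarrow> x \<noteq> y \<and> (y,x) \<notin> arc G \<and> (x,y) \<notin> und G \<and> x < nv G \<and> y < nv G"
  using mg unfolding mixed_graph_def by blast

lemma Nent_diag [simp]: "Nent G x x = 0"
  unfolding Nent_def using und_bounded arc_bounded by auto

lemma Nent_hermitian: "Nent G y x = cnj (Nent G x y)"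
  unfolding Nent_def using und_bounded arc_bounded by auto

lemma Nent_nonzero_iff: "Nent G x y \<noteq> 0 \<longleftrightarrow> underlying_adj G x y"
  unfolding Nent_def underlying_adj_def by simp

lemma Nent_in_N_values: "underlying_adj G x y \<Longrightarrow> Nent G x y \<in> N_values"
  unfolding Nent_def N_values_def underlying_adj_def by auto

lemma underlying_adj_bounded: "underlying_adj G x y \<Longrightarrow> x < nv G \<and> y < nv G"
  unfolding underlying_adj_def using und_bounded arc_bounded by blast

lemma underlying_adj_sym: "underlying_adj G x y \<Longrightarrow> underlying_adj G y x"
  unfolding underlying_adj_def using und_bounded by blast

lemma underlying_adj_irrefl: "\<not> underlying_adj G x x"
  unfolding underlying_adj_def using und_bounded arc_bounded by blast

lemma und_iff_Nent: "(x,y) \<in> und G \<longleftrightarrow> x < nv G \<and> y < nv G \<and> Nent G x y = 1"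
  using und_bounded[of x y] arc_bounded[of x y] arc_bounded[of y x]
  unfolding Nent_def by auto

lemma arc_iff_Nent: "(x,y) \<in> arc G \<longleftrightarrow> x < nv G \<and> y < nv G \<and> Nent G x y = omega"
  using arc_bounded[of x y] unfolding Nent_def by (auto simp: omega_neq[symmetric])

end

section \<open>Vanishing \<open>3 \<times> 3\<close> minors\<close>

definition minor3 :: "(nat \<Rightarrow> nat \<Rightarrow> 'a :: comm_ring_1) \<Rightarrow> nat \<Rightarrow> nat \<Rightarrow> nat \<Rightarrow> nat \<Rightarrow> nat \<Rightarrow> nat \<Rightarrow> 'a" where
  "minor3 A i j k l m q = A i l * A j m * A k q - A i l * A j q * A k m - A i m * A j l * A k q
     + A i m * A j q * A k l + A i q * A j l * A k m - A i q * A j m * A k l"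

lemma alternating3_vanishes:
  fixes F :: "nat \<Rightarrow> nat \<Rightarrow> nat \<Rightarrow> complex"
  assumes swap12: "\<And>i j k. F j i k = - F i j k" and swap23: "\<And>i j k. F i k j = - F i j k"
    and sorted: "\<And>i j k. i < j \<Longrightarrow> j < k \<Longrightarrow> k < n \<Longrightarrow> F i j k = 0"
    and "i < n" "j < n" "k < n"
  shows "F i j k = 0"
proof -
  have repeated: "F i i k = 0" "F i k k = 0" for i k
    using swap12[of i i k] swap23[of i k k] by simp_all
  have first_sorted: "F i j k = 0" if "i < j" "j < n" "k < n" for i j k
  proof (cases k i rule: linorder_cases)
    case less
    then show ?thesis using sorted[of k i j] swap12[of i k j] swap23[of i j k] that by simp
  next
    case equal
    then show ?thesis using repeated(1)[of i j] swap23[of i j i] by simp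
  next
    case greater
    then show ?thesis
      using sorted[of i k j] sorted[of i j k] swap23[of i j k] repeated(2)[of i j] that
      by (cases k j rule: linorder_cases) auto
  qed
  show ?thesis
    using first_sorted[of i j k] first_sorted[of j i k] swap12[of i j k] repeated(1)[of i k]
      \<open>i < n\<close> \<open>j < n\<close> \<open>k < n\<close>
    by (cases i j rule: linorder_cases) auto
qed

lemma minor3_swap_rows:
  "minor3 A j i k l m q = - minor3 A i j k l m q" "minor3 A i k j l m q = - minor3 A i j k l m q"
  unfolding minor3_def by (simp_all add: algebra_simps)

lemma minor3_swap_cols:
  "minor3 A i j k m l q = - minor3 A i j k l m q" "minor3 A i j k l q m = - minor3 A i j k l m q"
  unfolding minor3_def by (simp_all add: algebra_simps)

lemma det_2x2:
  assumes "(A :: 'a :: comm_ring_1 mat) \<in> carrier_mat 2 2"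
  shows "det A = A $$ (0,0) * A $$ (1,1) - A $$ (0,1) * A $$ (1,0)"
proof -
  have "det A = (\<Sum>j<2. A $$ (0,j) * cofactor A 0 j)"
    by (rule laplace_expansion_row[OF assms]) simp
  also have "\<dots> = A $$ (0,0) * A $$ (1,1) - A $$ (0,1) * A $$ (1,0)"
    using assms by (simp add: lessThan_nat_numeral cofactor_def det_single mat_delete_def)
  finally show ?thesis .
qed

lemma det_3x3:
  assumes "(A :: 'a :: comm_ring_1 mat) \<in> carrier_mat 3 3"
  shows "det A = minor3 (\<lambda>a b. A $$ (a,b)) 0 1 2 0 1 2"
proof -
  have "det A = (\<Sum>j<3. A $$ (0,j) * cofactor A 0 j)"
    by (rule laplace_expansion_row[OF assms]) simp
  also have "\<dots> = minor3 (\<lambda>a b. A $$ (a,b)) 0 1 2 0 1 2"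
    using assms
    by (simp add: lessThan_nat_numeral cofactor_def det_2x2 mat_delete_def minor3_def)
      (simp add: numeral_2_eq_2 algebra_simps)
  finally show ?thesis .
qed

lemma pick_3:
  assumes "i < j" "j < k"
  shows "pick {i,j,k} 0 = i" "pick {i,j,k} 1 = j" "pick {i,j,k} 2 = k"
proof -
  show p0: "pick {i,j,k} 0 = i" using assms by (simp, intro Least_equality) auto
  show p1: "pick {i,j,k} 1 = j" using assms p0 by (simp add: One_nat_def, intro Least_equality) auto
  show "pick {i,j,k} 2 = k" using assms p1 by (simp add: numeral_2_eq_2, intro Least_equality) auto
qed

lemma det_submatrix_3x3:
  assumes A: "(A :: 'a :: comm_ring_1 mat) \<in> carrier_mat n n"
    and "i < j" "j < k" "k < n" "l < m" "m < q" "q < n"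
  shows "det (submatrix A {i,j,k} {l,m,q}) = minor3 (\<lambda>a b. A $$ (a,b)) i j k l m q"
proof -
  have "i < n" "j < n" "l < n" "m < n" using assms by linarith+
  then have rows: "{a. a < n \<and> a \<in> {i,j,k}} = {i,j,k}" and cols: "{a. a < n \<and> a \<in> {l,m,q}} = {l,m,q}"
    using assms by auto
  have card: "card {a. a < n \<and> a \<in> {i,j,k}} = 3" "card {a. a < n \<and> a \<in> {l,m,q}} = 3"
    unfolding rows cols using assms by auto
  have S: "submatrix A {i,j,k} {l,m,q} \<in> carrier_mat 3 3"
    using card A unfolding carrier_mat_def by (simp add: dim_submatrix)
  have "submatrix A {i,j,k} {l,m,q} $$ (a,b) = A $$ (pick {i,j,k} a, pick {l,m,q} b)"
    if "a < 3" "b < 3" for a b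
    by (rule submatrix_index) (use that card A in auto)
  then show ?thesis
    unfolding det_3x3[OF S] minor3_def using pick_3[of i j k] pick_3[of l m q] assms by simp
qed

lemma rank_le_2_minor3_vanishes:
  fixes A :: "complex mat"
  assumes A: "A \<in> carrier_mat n n" and rank: "vec_space.rank n A \<le> 2"
    and "i < n" "j < n" "k < n" "l < n" "m < n" "q < n"
  shows "minor3 (\<lambda>a b. A $$ (a,b)) i j k l m q = 0"
proof -
  have sorted: "minor3 (\<lambda>a b. A $$ (a,b)) i j k l m q = 0"
    if "i < j" "j < k" "k < n" "l < m" "m < q" "q < n" for i j k l m q
  proof (rule ccontr)
    assume "minor3 (\<lambda>a b. A $$ (a,b)) i j k l m q \<noteq> 0"
    then have "det (submatrix A {i,j,k} {l,m,q}) \<noteq> 0"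
      using det_submatrix_3x3[OF A that] by simp
    then have "card {a. a < n \<and> a \<in> {l,m,q}} \<le> vec_space.rank n A"
      by (rule vec_space.rank_gt_minor[OF A])
    moreover have "{a. a < n \<and> a \<in> {l,m,q}} = {l,m,q}" using that by auto
    ultimately show False using that rank by simp
  qed
  have "minor3 (\<lambda>a b. A $$ (a,b)) i j k l m q = 0" if "i < j" "j < k" "k < n" for i j k
    by (rule alternating3_vanishes[where F = "minor3 (\<lambda>a b. A $$ (a,b)) i j k",
          OF minor3_swap_cols sorted[OF that]])
      (use assms in auto)
  then show ?thesis
    by (rule alternating3_vanishes[where F = "\<lambda>i j k. minor3 (\<lambda>a b. A $$ (a,b)) i j k l m q",
          OF minor3_swap_rows])
      (use assms in auto)
qed

definition minors3_vanish :: "mgraph \<Rightarrow> bool" where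
  "minors3_vanish G \<longleftrightarrow> (\<forall>i j k l m q. i < nv G \<longrightarrow> j < nv G \<longrightarrow> k < nv G \<longrightarrow> l < nv G
      \<longrightarrow> m < nv G \<longrightarrow> q < nv G \<longrightarrow> minor3 (Nent G) i j k l m q = 0)"

lemma rank_N_le_2_minors3_vanish:
  assumes "rank_N G \<le> 2"
  shows "minors3_vanish G"
  unfolding minors3_vanish_def
proof (intro allI impI)
  fix i j k l m q
  assume ind: "i < nv G" "j < nv G" "k < nv G" "l < nv G" "m < nv G" "q < nv G"
  have "minor3 (\<lambda>a b. Nmat G $$ (a,b)) i j k l m q = 0"
    using rank_le_2_minor3_vanishes[OF Nmat_carrier] assms ind unfolding rank_N_def by blast
  then show "minor3 (Nent G) i j k l m q = 0"
    unfolding minor3_def using ind by (simp add: Nmat_index)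
qed

section \<open>Graphs whose \<open>3 \<times> 3\<close> minors vanish\<close>

text \<open>\<open>N = D A D\<^sup>*\<close> for \<open>D = diag p\<close> and the adjacency matrix \<open>A\<close> of the complete bipartite
  graph with sides \<open>\<sigma>\<close> and \<open>\<not> \<sigma>\<close>.\<close>
definition complete_bipartite_form :: "mgraph \<Rightarrow> (nat \<Rightarrow> bool) \<Rightarrow> (nat \<Rightarrow> complex) \<Rightarrow> bool" where
  "complete_bipartite_form G \<sigma> p \<longleftrightarrow> (\<forall>x<nv G. p x \<in> T6) \<and>
     (\<forall>x<nv G. \<forall>y<nv G. Nent G x y = (if \<sigma> x = \<sigma> y then 0 else p x * cnj (p y)))"

context
  fixes G assumes mg: "mixed_graph G" and mz: "minors3_vanish G"
begin

private abbreviation adj where "adj \<equiv> underlying_adj G"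

lemma no_triangle:
  assumes "adj x y" "adj y z" "adj x z"
  shows False
proof -
  have ind: "x < nv G" "y < nv G" "z < nv G" using assms underlying_adj_bounded[OF mg] by auto
  have entries: "Nent G x y \<in> N_values" "Nent G y z \<in> N_values" "Nent G z x \<in> N_values"
    using assms Nent_in_N_values[OF mg] underlying_adj_sym[OF mg] by blast+
  let ?c = "Nent G x y * Nent G y z * Nent G z x"
  have "minor3 (Nent G) x y z x y z = ?c + cnj ?c"
    unfolding minor3_def
    using Nent_hermitian[OF mg, of x y] Nent_hermitian[OF mg, of y z] Nent_hermitian[OF mg, of z x]
    by (simp add: Nent_diag[OF mg] algebra_simps)
  moreover have "minor3 (Nent G) x y z x y z = 0" using mz ind unfolding minors3_vanish_def by blast
  moreover have "?c \<in> T6"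
    using entries N_values_subset_T6 T6_mult_N_values by blast
  ultimately show False using T6_Re_nonzero by metis
qed

lemma no_induced_P4:
  assumes "adj a b" "adj b c" "adj c d" "\<not> adj a c" "\<not> adj b d" "\<not> adj a d"
  shows False
proof -
  have ind: "a < nv G" "b < nv G" "c < nv G" "d < nv G" using assms underlying_adj_bounded[OF mg] by auto
  have "Nent G a c = 0" "Nent G b d = 0" "Nent G a d = 0" using assms Nent_nonzero_iff[OF mg] by auto
  then have "minor3 (Nent G) a b c b c d = Nent G a b * Nent G b c * Nent G c d"
    unfolding minor3_def by (simp add: Nent_diag[OF mg])
  moreover have "minor3 (Nent G) a b c b c d = 0" using mz ind unfolding minors3_vanish_def by blast
  moreover have "Nent G a b \<noteq> 0" "Nent G b c \<noteq> 0" "Nent G c d \<noteq> 0"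
    using assms Nent_nonzero_iff[OF mg] by blast+
  ultimately show False by simp
qed

lemma minor2_vanishes:
  assumes "x < nv G" "x' < nv G" "y < nv G" "y' < nv G"
    and "\<not> adj x x'" "\<not> adj y y'" "adj y x"
  shows "Nent G x y * Nent G x' y' = Nent G x y' * Nent G x' y"
proof -
  have zero: "Nent G x' x = 0" "Nent G y y' = 0"
    using assms Nent_nonzero_iff[OF mg] underlying_adj_sym[OF mg] by blast+
  have "minor3 (Nent G) x x' y y y' x = Nent G y x * (Nent G x y * Nent G x' y' - Nent G x y' * Nent G x' y)"
    unfolding minor3_def using zero by (simp add: Nent_diag[OF mg] algebra_simps)
  moreover have "minor3 (Nent G) x x' y y y' x = 0" using mz assms unfolding minors3_vanish_def by blast
  moreover have "Nent G y x \<noteq> 0" using assms Nent_nonzero_iff[OF mg] by blast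
  ultimately show ?thesis by simp
qed

text \<open>Induction along a walk from \<open>r\<close>: each alternative that fails produces a triangle or an
  induced path on four vertices.\<close>
lemma adjacent_or_dominates:
  assumes rt: "adj r t" and "adj\<^sup>*\<^sup>* r w"
  shows "adj r w \<or> (\<forall>y. adj r y \<longrightarrow> adj w y)"
  using \<open>adj\<^sup>*\<^sup>* r w\<close>
proof (induction rule: rtranclp_induct)
  case (step z w)
  have wr: "\<not> adj w r" if "\<not> adj r w" using that underlying_adj_sym[OF mg] by blast
  show ?case
  proof (cases "adj r z")
    case True
    have "adj w y" if "\<not> adj r w" "adj r y" for y
      using no_triangle[of z r y] no_induced_P4[of w z r y] step(2) True that wr
        underlying_adj_sym[OF mg] by blast
    then show ?thesis by blast
  next
    case False
    then have "adj z t" using step(3) rt by blast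
    then show ?thesis
      using no_triangle[of w z t] no_induced_P4[of w z t r] step(2) rt False wr
        underlying_adj_sym[OF mg] by blast
  qed
qed simp

lemma adj_iff_opposite_sides:
  assumes conn: "connected_mg G" and rt: "adj r t" and xy: "x < nv G" "y < nv G"
  shows "adj x y \<longleftrightarrow> adj r x \<noteq> adj r y"
proof -
  have r: "r < nv G" using rt underlying_adj_bounded[OF mg] by blast
  have "adj\<^sup>*\<^sup>* r x" "adj\<^sup>*\<^sup>* r y" using conn r xy unfolding connected_mg_def by blast+
  then have x: "adj r x \<or> (\<forall>z. adj r z \<longrightarrow> adj x z)" and y: "adj r y \<or> (\<forall>z. adj r z \<longrightarrow> adj y z)"
    using adjacent_or_dominates[OF rt] by blast+
  show ?thesis
  proof (cases "adj r x"; cases "adj r y")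
    assume "adj r x" "adj r y"
    then show ?thesis using no_triangle[of r x y] by blast
  next
    assume "adj r x" "\<not> adj r y"
    then show ?thesis using y underlying_adj_sym[OF mg] by blast
  next
    assume "\<not> adj r x" "adj r y"
    then show ?thesis using x by blast
  next
    assume "\<not> adj r x" "\<not> adj r y"
    then show ?thesis using x y rt no_triangle[of x y t] underlying_adj_sym[OF mg] by blast
  qed
qed

text \<open>The vanishing \<open>2 \<times> 2\<close> minor with rows \<open>x, r\<close> and columns \<open>y, t\<close>.\<close>
lemma Nent_factorization:
  assumes conn: "connected_mg G" and rt: "adj r t" and xy: "x < nv G" "y < nv G"
    and "\<not> adj r x" "adj r y"
  shows "Nent G x y = Nent G x t * cnj (cnj (Nent G r y) * Nent G r t)"
proof -
  have rt_bounded: "r < nv G" "t < nv G" using rt underlying_adj_bounded[OF mg] by auto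
  have minor: "Nent G x y * Nent G r t = Nent G x t * Nent G r y"
    using minor2_vanishes[OF xy(1) rt_bounded(1) xy(2) rt_bounded(2)] assms
      adj_iff_opposite_sides[OF conn rt xy(1) rt_bounded(1)]
      adj_iff_opposite_sides[OF conn rt xy(2) rt_bounded(2)]
      adj_iff_opposite_sides[OF conn rt xy(2) xy(1)] underlying_adj_irrefl[OF mg]
    by simp
  have "cnj (Nent G r t) * Nent G r t = 1"
    using Nent_in_N_values[OF mg rt] N_values_subset_T6 T6_cnj_mult_self by blast
  then have "Nent G x y = Nent G x y * Nent G r t * cnj (Nent G r t)"
    by (simp add: mult.assoc mult.commute)
  then show ?thesis unfolding minor by (simp add: ac_simps)
qed

lemma minors3_vanish_complete_bipartite_form:
  assumes conn: "connected_mg G" and n: "2 \<le> nv G"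
  obtains \<sigma> p where "complete_bipartite_form G \<sigma> p"
proof -
  have "adj\<^sup>*\<^sup>* 0 1" using conn n unfolding connected_mg_def by auto
  then obtain t where rt: "adj 0 t"
  proof (cases rule: converse_rtranclpE)
    case base
    then show thesis by simp
  next
    case (step y)
    then show thesis using that by blast
  qed
  \<comment> \<open>normalised by \<open>p t = 1\<close>: read off column \<open>t\<close> on the side of \<open>0\<close>, off row \<open>0\<close> on the other\<close>
  define p where "p x = (if adj 0 x then cnj (Nent G 0 x) * Nent G 0 t else Nent G x t)" for x
  have t: "t < nv G" "\<not> adj 0 0" using rt underlying_adj_bounded[OF mg] underlying_adj_irrefl[OF mg] by auto
  have "p x \<in> T6" if "x < nv G" for x
  proof (cases "adj 0 x")
    case True
    then have "cnj (Nent G 0 x) \<in> T6" using Nent_in_N_values[OF mg] N_values_subset_T6 T6_cnj by blast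
    then show ?thesis using True Nent_in_N_values[OF mg rt] T6_mult_N_values unfolding p_def by simp
  next
    case False
    then have "adj x t" using adj_iff_opposite_sides[OF conn rt that t(1)] rt by simp
    then show ?thesis using False Nent_in_N_values[OF mg] N_values_subset_T6 unfolding p_def by auto
  qed
  moreover have "Nent G x y = (if adj 0 x = adj 0 y then 0 else p x * cnj (p y))"
    if xy: "x < nv G" "y < nv G" for x y
  proof (cases "adj 0 x = adj 0 y")
    case True
    then show ?thesis using adj_iff_opposite_sides[OF conn rt xy] Nent_nonzero_iff[OF mg, of x y] by simp
  next
    case False
    then consider "\<not> adj 0 x" "adj 0 y" | "adj 0 x" "\<not> adj 0 y" by blast
    then show ?thesis
    proof cases
      case 1
      then show ?thesis using Nent_factorization[OF conn rt xy] False unfolding p_def by simp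
    next
      case 2
      then have "Nent G y x = p y * cnj (p x)"
        using Nent_factorization[OF conn rt xy(2,1)] unfolding p_def by simp
      then have "Nent G x y = cnj (p y * cnj (p x))"
        using Nent_hermitian[OF mg, of x y] by (metis complex_cnj_cnj)
      then show ?thesis using False by (simp add: mult.commute)
    qed
  qed
  ultimately show thesis
    using that[of "adj 0" p] unfolding complete_bipartite_form_def by blast
qed

end

definition trace_mat :: "'a :: comm_ring_1 mat \<Rightarrow> 'a" where
  "trace_mat A = (\<Sum>i<dim_row A. A $$ (i,i))"

lemma trace_mat_mult_comm:
  assumes A: "A \<in> carrier_mat n m" and B: "B \<in> carrier_mat m n"
  shows "trace_mat (A * B) = trace_mat (B * A)"
proof -
  have "trace_mat (A * B) = (\<Sum>i<n. \<Sum>k<m. A $$ (i,k) * B $$ (k,i))"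
    unfolding trace_mat_def using A B by (simp add: scalar_prod_def atLeast0LessThan)
  also have "\<dots> = (\<Sum>k<m. \<Sum>i<n. B $$ (k,i) * A $$ (i,k))"
    by (subst sum.swap) (simp add: mult.commute)
  also have "\<dots> = trace_mat (B * A)"
    unfolding trace_mat_def using A B by (simp add: scalar_prod_def atLeast0LessThan)
  finally show ?thesis .
qed

lemma trace_mat_similar:
  assumes A: "A \<in> carrier_mat n n" and sim: "similar_mat_wit A B P Q"
  shows "trace_mat A = trace_mat B"
proof -
  from similar_mat_witD2[OF A sim] have QP: "Q * P = 1\<^sub>m n" and AB: "A = P * B * Q"
    and B: "B \<in> carrier_mat n n" and P: "P \<in> carrier_mat n n" and Q: "Q \<in> carrier_mat n n"
    by auto
  have "trace_mat A = trace_mat (Q * (P * B))"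
    unfolding AB by (rule trace_mat_mult_comm[OF mult_carrier_mat[OF P B] Q])
  also have "Q * (P * B) = B"
    using assoc_mult_mat[OF Q P B] QP B by simp
  finally show ?thesis .
qed

lemma trace_mat_square_upper_triangular:
  assumes B: "B \<in> carrier_mat n n" and ut: "upper_triangular B"
  shows "trace_mat (B * B) = (\<Sum>i<n. B $$ (i,i) ^ 2)"
proof -
  have "(B * B) $$ (i,i) = B $$ (i,i) ^ 2" if i: "i < n" for i
  proof -
    have "(B * B) $$ (i,i) = (\<Sum>k<n. B $$ (i,k) * B $$ (k,i))"
      using B i by (simp add: scalar_prod_def atLeast0LessThan)
    also have "\<dots> = (\<Sum>k\<in>{i}. B $$ (i,k) * B $$ (k,i))"
    proof (rule sum.mono_neutral_right)
      show "\<forall>k\<in>{..<n} - {i}. B $$ (i,k) * B $$ (k,i) = 0"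
      proof
        fix k assume k: "k \<in> {..<n} - {i}"
        then consider "k < i" | "i < k" by fastforce
        then show "B $$ (i,k) * B $$ (k,i) = 0"
          by cases (use ut B i k in \<open>auto simp: upper_triangular_def\<close>)
      qed
    qed (use i in auto)
    finally show ?thesis by (simp add: power2_eq_square)
  qed
  then show ?thesis unfolding trace_mat_def using B by simp
qed

lemma trace_mat_square_eigenvalues:
  fixes A :: "complex mat"
  assumes A: "A \<in> carrier_mat n n" and c: "char_poly A = (\<Prod>e\<leftarrow>es. [:- e, 1:])"
  shows "trace_mat (A * A) = (\<Sum>e\<leftarrow>es. e ^ 2)"
proof -
  obtain B P Q where "schur_decomposition A es = (B,P,Q)" by (cases "schur_decomposition A es")
  from schur_decomposition[OF A c this] have sim: "similar_mat_wit A B P Q"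
    and ut: "upper_triangular B" and diag: "diag_mat B = es" by auto
  have B: "B \<in> carrier_mat n n" using similar_mat_witD2[OF A sim] by auto
  have "A ^\<^sub>m 2 = A * A" "B ^\<^sub>m 2 = B * B"
    using A B by (simp_all add: numeral_2_eq_2)
  then have "similar_mat_wit (A * A) (B * B) P Q"
    using similar_mat_wit_pow[OF sim, of 2] by simp
  then have "trace_mat (A * A) = trace_mat (B * B)"
    by (rule trace_mat_similar[OF mult_carrier_mat[OF A A]])
  also have "\<dots> = (\<Sum>i<n. B $$ (i,i) ^ 2)" by (rule trace_mat_square_upper_triangular[OF B ut])
  also have "\<dots> = (\<Sum>e\<leftarrow>es. e ^ 2)"
    unfolding diag[symmetric] diag_mat_def using B
    by (simp add: sum_set_upt_conv_sum_list_nat[symmetric] atLeast0LessThan o_def)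
  finally show ?thesis .
qed

lemma char_poly_eq_trace_mat_square_eq:
  fixes A B :: "complex mat"
  assumes A: "A \<in> carrier_mat n n" and B: "B \<in> carrier_mat n n" and c: "char_poly A = char_poly B"
  shows "trace_mat (A * A) = trace_mat (B * B)"
proof -
  obtain es where es: "char_poly A = (\<Prod>e\<leftarrow>es. [:- e, 1:])"
    using char_poly_factorized[OF A] by blast
  show ?thesis using trace_mat_square_eigenvalues[OF A es] trace_mat_square_eigenvalues[OF B es[unfolded c]]
    by simp
qed

lemma proots_linear_factors: "proots (\<Prod>a\<leftarrow>as. [:- a, 1:]) = mset (as :: complex list)"
proof (induction as)
  case (Cons a as)
  have "(\<Prod>a\<leftarrow>as. [:- a, 1:]) \<noteq> (0 :: complex poly)"
    unfolding prod_list_zero_iff by auto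
  then have "proots ([:- a, 1:] * (\<Prod>a\<leftarrow>as. [:- a, 1:])) = proots [:- a, 1:] + proots (\<Prod>a\<leftarrow>as. [:- a, 1:])"
    by (intro proots_mult) auto
  then show ?case using Cons by simp
qed simp

lemma cospectral_char_poly_eq:
  assumes "cospectral G H"
  shows "nv G = nv H" "char_poly (Nmat G) = char_poly (Nmat H)"
proof -
  obtain as where as: "char_poly (Nmat G) = (\<Prod>a\<leftarrow>as. [:- a, 1:])" "length as = nv G"
    using char_poly_factorized[OF Nmat_carrier] by blast
  obtain bs where bs: "char_poly (Nmat H) = (\<Prod>a\<leftarrow>bs. [:- a, 1:])" "length bs = nv H"
    using char_poly_factorized[OF Nmat_carrier] by blast
  have "mset as = mset bs"
    using assms as(1) bs(1) proots_linear_factors unfolding cospectral_def eigenvalue_mset_def by metis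
  then show "nv G = nv H" "char_poly (Nmat G) = char_poly (Nmat H)"
    unfolding as(1) bs(1) using as(2) bs(2)
    by (metis size_mset, metis prod_mset_prod_list mset_map)
qed

lemma trace_mat_square_Nmat:
  "trace_mat (Nmat G * Nmat G) = (\<Sum>x<nv G. \<Sum>y<nv G. Nent G x y * Nent G y x)"
  unfolding trace_mat_def using Nmat_carrier[of G]
  by (simp add: scalar_prod_def atLeast0LessThan Nmat_index)

section \<open>The spectrum of a complete bipartite form\<close>

lemma Nmat_mult_vec_index:
  assumes "x < nv G" "dim_vec w = nv G"
  shows "(Nmat G *\<^sub>v w) $ x = (\<Sum>y<nv G. Nent G x y * w $ y)"
  using assms Nmat_carrier[of G] by (simp add: scalar_prod_def atLeast0LessThan Nmat_index)

lemma sum_if_eq_card: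
  "(\<Sum>y<(n::nat). if \<sigma> y = c then k else 0) = of_nat (card {y. y < n \<and> \<sigma> y = c}) * (k :: 'a :: semiring_1)"
proof -
  have "(\<Sum>y<n. if \<sigma> y = c then k else 0) = (\<Sum>y\<in>{y\<in>{..<n}. \<sigma> y = c}. k)"
    by (rule sum.inter_filter[symmetric]) simp
  also have "{y\<in>{..<n}. \<sigma> y = c} = {y. y < n \<and> \<sigma> y = c}" by auto
  finally show ?thesis by simp
qed

context
  fixes G \<sigma> p assumes form: "complete_bipartite_form G \<sigma> p"
begin

lemma complete_bipartite_form_Nent:
  "x < nv G \<Longrightarrow> y < nv G \<Longrightarrow> Nent G x y = (if \<sigma> x = \<sigma> y then 0 else p x * cnj (p y))"
  using form unfolding complete_bipartite_form_def by blast

lemma complete_bipartite_form_T6: "x < nv G \<Longrightarrow> p x \<in> T6"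
  using form unfolding complete_bipartite_form_def by blast

lemma complete_bipartite_form_mult_vec:
  assumes x: "x < nv G"
  shows "(\<Sum>y<nv G. Nent G x y * (f (\<sigma> y) * p y))
    = of_nat (card {y. y < nv G \<and> \<sigma> y = (\<not> \<sigma> x)}) * (p x * f (\<not> \<sigma> x))"
proof -
  have "Nent G x y * (f (\<sigma> y) * p y) = (if \<sigma> y = (\<not> \<sigma> x) then p x * f (\<not> \<sigma> x) else 0)"
    if y: "y < nv G" for y
  proof -
    have "p x * cnj (p y) * (f (\<sigma> y) * p y) = p x * f (\<sigma> y) * (cnj (p y) * p y)"
      by (simp add: ac_simps)
    then show ?thesis
      using complete_bipartite_form_Nent[OF x y] T6_cnj_mult_self[OF complete_bipartite_form_T6[OF y]]
      by auto
  qed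
  then show ?thesis by (simp add: sum_if_eq_card)
qed

lemma complete_bipartite_form_trace:
  "trace_mat (Nmat G * Nmat G) = 2 * of_nat (card {y. y < nv G \<and> \<sigma> y} * card {y. y < nv G \<and> \<not> \<sigma> y})"
proof -
  let ?a = "card {y. y < nv G \<and> \<sigma> y}" and ?b = "card {y. y < nv G \<and> \<not> \<sigma> y}"
  have "(\<Sum>y<nv G. Nent G x y * Nent G y x) = (if \<sigma> x then of_nat ?b else of_nat ?a)"
    if x: "x < nv G" for x
  proof -
    have "(\<Sum>y<nv G. Nent G x y * Nent G y x) = (\<Sum>y<nv G. Nent G x y * ((\<lambda>_. cnj (p x)) (\<sigma> y) * p y))"
      using complete_bipartite_form_Nent[OF x] complete_bipartite_form_Nent[of _ x] x
      by (intro sum.cong refl) (simp add: ac_simps)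
    also have "\<dots> = of_nat (card {y. y < nv G \<and> \<sigma> y = (\<not> \<sigma> x)}) * (p x * cnj (p x))"
      by (rule complete_bipartite_form_mult_vec[OF x])
    finally show ?thesis
      using T6_cnj_mult_self[OF complete_bipartite_form_T6[OF x]] by (simp add: mult.commute)
  qed
  then have "trace_mat (Nmat G * Nmat G) = (\<Sum>x<nv G. if \<sigma> x then of_nat ?b else of_nat ?a)"
    unfolding trace_mat_square_Nmat by simp
  also have "\<dots> = (\<Sum>x<nv G. if \<sigma> x = True then of_nat ?b else 0) + (\<Sum>x<nv G. if \<sigma> x = False then of_nat ?a else 0)"
    unfolding sum.distrib[symmetric] by (intro sum.cong refl) auto
  also have "\<dots> = 2 * of_nat (?a * ?b)" unfolding sum_if_eq_card by simp
  finally show ?thesis .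
qed

lemma complete_bipartite_form_eigenvalue:
  assumes sides: "\<exists>x<nv G. \<sigma> x" "\<exists>x<nv G. \<not> \<sigma> x" and s: "s = 1 \<or> s = -1"
  shows "eigenvalue (Nmat G)
    (s * complex_of_real (sqrt (real (card {y. y < nv G \<and> \<sigma> y} * card {y. y < nv G \<and> \<not> \<sigma> y}))))"
proof -
  let ?a = "card {y. y < nv G \<and> \<sigma> y}" and ?b = "card {y. y < nv G \<and> \<not> \<sigma> y}"
  define ra where "ra = complex_of_real (sqrt (real ?a))"
  define rb where "rb = complex_of_real (sqrt (real ?b))"
  have squares: "ra * ra = of_nat ?a" "rb * rb = of_nat ?b" "s * s = 1"
    unfolding ra_def rb_def using s by (auto simp flip: of_real_mult)
  have nonzero: "ra \<noteq> 0" "rb \<noteq> 0" "s \<noteq> 0" unfolding ra_def rb_def using s sides by auto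
  define f where "f c = (if c then rb else s * ra)" for c
  define w where "w = vec (nv G) (\<lambda>y. f (\<sigma> y) * p y)"
  have "Nmat G *\<^sub>v w = (s * (ra * rb)) \<cdot>\<^sub>v w"
  proof (rule eq_vecI)
    fix x assume "x < dim_vec ((s * (ra * rb)) \<cdot>\<^sub>v w)"
    then have x: "x < nv G" unfolding w_def by simp
    have "(Nmat G *\<^sub>v w) $ x = (\<Sum>y<nv G. Nent G x y * (f (\<sigma> y) * p y))"
      using Nmat_mult_vec_index[OF x] x unfolding w_def by simp
    also have "\<dots> = of_nat (card {y. y < nv G \<and> \<sigma> y = (\<not> \<sigma> x)}) * (p x * f (\<not> \<sigma> x))"
      by (rule complete_bipartite_form_mult_vec[OF x])
    also have "\<dots> = (s * (ra * rb)) * w $ x"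
      using x squares(3) unfolding w_def f_def
      by (cases "\<sigma> x") (simp_all flip: squares(1,2) add: mult_ac)
    finally show "(Nmat G *\<^sub>v w) $ x = ((s * (ra * rb)) \<cdot>\<^sub>v w) $ x" using x unfolding w_def by simp
  qed (simp add: w_def Nmat_def)
  moreover have "w \<noteq> 0\<^sub>v (nv G)"
  proof
    obtain x where x: "x < nv G" using sides by blast
    then have "p x \<noteq> 0" using complete_bipartite_form_T6 T6_nonzero by blast
    then have "w $ x \<noteq> 0" using x nonzero unfolding w_def f_def by simp
    moreover assume "w = 0\<^sub>v (nv G)"
    ultimately show False using x by simp
  qed
  ultimately have "eigenvector (Nmat G) w (s * (ra * rb))"
    unfolding eigenvector_def using Nmat_carrier[of G] unfolding w_def by simp
  moreover have "ra * rb = complex_of_real (sqrt (real (?a * ?b)))"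
    unfolding ra_def rb_def by (simp add: real_sqrt_mult)
  ultimately show ?thesis unfolding eigenvalue_def by auto
qed

end

lemma complete_bipartite_form_sides:
  assumes mg: "mixed_graph G" and conn: "connected_mg G" and n: "2 \<le> nv G"
    and form: "complete_bipartite_form G \<sigma> p"
  shows "\<exists>x<nv G. \<sigma> x" "\<exists>x<nv G. \<not> \<sigma> x"
proof -
  have "(underlying_adj G)\<^sup>*\<^sup>* 0 1" using conn n unfolding connected_mg_def by auto
  then obtain t where t: "underlying_adj G 0 t"
  proof (cases rule: converse_rtranclpE)
    case base
    then show thesis by simp
  next
    case (step y)
    then show thesis using that by blast
  qed
  then have ind: "0 < nv G" "t < nv G" using underlying_adj_bounded[OF mg] by auto
  have "Nent G 0 t \<noteq> 0" using t Nent_nonzero_iff[OF mg] by blast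
  then have "\<sigma> 0 \<noteq> \<sigma> t" using complete_bipartite_form_Nent[OF form ind] by (auto split: if_splits)
  then show "\<exists>x<nv G. \<sigma> x" "\<exists>x<nv G. \<not> \<sigma> x" using ind by blast+
qed

section \<open>Hermitian matrices with eigenvalues \<open>\<plusminus>s\<close> and \<open>tr N\<^sup>2 = 2 s\<^sup>2\<close>\<close>

definition frobenius_inner :: "nat \<Rightarrow> (nat \<Rightarrow> nat \<Rightarrow> complex) \<Rightarrow> (nat \<Rightarrow> nat \<Rightarrow> complex) \<Rightarrow> complex" where
  "frobenius_inner n A B = (\<Sum>x<n. \<Sum>y<n. A x y * cnj (B x y))"

lemma frobenius_inner_add_left:
  "frobenius_inner n (\<lambda>x y. A x y + c * B x y) C = frobenius_inner n A C + c * frobenius_inner n B C"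
  unfolding frobenius_inner_def by (simp add: algebra_simps sum.distrib sum_distrib_left)

lemma frobenius_inner_add_right:
  "frobenius_inner n C (\<lambda>x y. A x y + c * B x y) = frobenius_inner n C A + cnj c * frobenius_inner n C B"
  unfolding frobenius_inner_def by (simp add: algebra_simps sum.distrib sum_distrib_left)

lemma frobenius_inner_commute: "frobenius_inner n B A = cnj (frobenius_inner n A B)"
  unfolding frobenius_inner_def by (simp add: mult.commute)

lemma frobenius_inner_self_eq_0:
  assumes "frobenius_inner n A A = 0" "x < n" "y < n"
  shows "A x y = 0"
proof -
  have "frobenius_inner n A A = complex_of_real (\<Sum>x<n. \<Sum>y<n. (norm (A x y))\<^sup>2)"
    unfolding frobenius_inner_def by (simp add: complex_norm_square[symmetric])
  then have "(\<Sum>x<n. \<Sum>y<n. (norm (A x y))\<^sup>2) = 0" using assms(1) by (metis of_real_eq_0_iff)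
  then have "(\<Sum>y<n. (norm (A x y))\<^sup>2) = 0" using assms(2)
    by (subst (asm) sum_nonneg_eq_0_iff) (auto intro: sum_nonneg)
  then show ?thesis using assms(3) by (subst (asm) sum_nonneg_eq_0_iff) auto
qed

text \<open>Pythagoras: expanding \<open>\<parallel>N - s U + s V\<parallel>\<^sup>2\<close> gives \<open>2 s\<^sup>2 - 2 s\<^sup>2 - 2 s\<^sup>2 + s\<^sup>2 + s\<^sup>2 = 0\<close>.\<close>
lemma frobenius_inner_combination:
  assumes real: "cnj s = s"
    and NN: "frobenius_inner n N N = 2 * s * s"
    and NU: "frobenius_inner n N U = s" and NV: "frobenius_inner n N V = - s"
    and UU: "frobenius_inner n U U = 1" and VV: "frobenius_inner n V V = 1"
    and UV: "frobenius_inner n U V = 0"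
    and "x < n" "y < n"
  shows "N x y = s * U x y - s * V x y"
proof -
  define M1 where "M1 = (\<lambda>x y. N x y + (- s) * U x y)"
  define M where "M = (\<lambda>x y. M1 x y + s * V x y)"
  have M_right: "frobenius_inner n X M = frobenius_inner n X N - s * frobenius_inner n X U
      + s * frobenius_inner n X V" for X
    unfolding M_def M1_def frobenius_inner_add_right using real by simp
  have "frobenius_inner n M M
      = frobenius_inner n N M - s * frobenius_inner n U M + s * frobenius_inner n V M"
    using frobenius_inner_add_left[of n M1 s V M, folded M_def]
      frobenius_inner_add_left[of n N "- s" U M, folded M1_def] by simp
  also have "\<dots> = 0"
    unfolding M_right frobenius_inner_commute[of n U N] frobenius_inner_commute[of n V N]
      frobenius_inner_commute[of n V U] NN NU NV UU VV UV using real by (simp add: algebra_simps)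
  finally have "M x y = 0" using frobenius_inner_self_eq_0 assms by blast
  then show ?thesis unfolding M_def M1_def by (simp add: algebra_simps)
qed

definition sqnorm :: "nat \<Rightarrow> (nat \<Rightarrow> complex) \<Rightarrow> complex" where
  "sqnorm n u = (\<Sum>z<n. u z * cnj (u z))"

definition projector :: "nat \<Rightarrow> (nat \<Rightarrow> complex) \<Rightarrow> nat \<Rightarrow> nat \<Rightarrow> complex" where
  "projector n u x y = u x * cnj (u y) / sqnorm n u"

lemma cnj_sqnorm [simp]: "cnj (sqnorm n u) = sqnorm n u"
  unfolding sqnorm_def by (simp add: mult.commute)

lemma sqnorm_nonzero:
  assumes "x < n" "u x \<noteq> 0"
  shows "sqnorm n u \<noteq> 0"
proof -
  have "(\<Sum>z<n. (norm (u z))\<^sup>2) > 0"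
    by (rule sum_pos2[of _ x]) (use assms in auto)
  moreover have "sqnorm n u = complex_of_real (\<Sum>z<n. (norm (u z))\<^sup>2)"
    unfolding sqnorm_def by (simp add: complex_norm_square[symmetric])
  ultimately show ?thesis by (metis of_real_eq_0_iff less_irrefl)
qed

lemma cnj_projector: "cnj (projector n u x y) = cnj (u x) * u y / sqnorm n u"
  unfolding projector_def by (simp add: mult.commute)

context
  fixes n :: nat and u v :: "nat \<Rightarrow> complex"
  assumes u: "sqnorm n u \<noteq> 0" and v: "sqnorm n v \<noteq> 0"
begin

lemma frobenius_inner_projector_self: "frobenius_inner n (projector n u) (projector n u) = 1"
proof -
  have "frobenius_inner n (projector n u) (projector n u)
      = (\<Sum>x<n. \<Sum>y<n. (u x * cnj (u x)) * (u y * cnj (u y))) / (sqnorm n u * sqnorm n u)"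
    unfolding frobenius_inner_def cnj_projector sum_divide_distrib
    by (intro sum.cong refl) (simp add: projector_def mult_ac)
  also have "\<dots> = sqnorm n u * sqnorm n u / (sqnorm n u * sqnorm n u)"
    unfolding sqnorm_def sum_product ..
  finally show ?thesis using u by simp
qed

lemma frobenius_inner_projector_eigen:
  assumes "\<And>x. x < n \<Longrightarrow> (\<Sum>y<n. N x y * u y) = e * u x"
  shows "frobenius_inner n N (projector n u) = e"
proof -
  have "frobenius_inner n N (projector n u) = (\<Sum>x<n. cnj (u x) * (\<Sum>y<n. N x y * u y)) / sqnorm n u"
    unfolding frobenius_inner_def cnj_projector sum_divide_distrib sum_distrib_left
    by (intro sum.cong refl) (simp add: mult_ac)
  also have "\<dots> = (\<Sum>x<n. e * (u x * cnj (u x))) / sqnorm n u"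
    using assms by (simp add: mult_ac)
  also have "\<dots> = e * sqnorm n u / sqnorm n u"
    unfolding sqnorm_def sum_distrib_left ..
  finally show ?thesis using u by simp
qed

lemma frobenius_inner_projector_orthogonal:
  assumes "(\<Sum>x<n. cnj (u x) * v x) = 0"
  shows "frobenius_inner n (projector n u) (projector n v) = 0"
proof -
  have "frobenius_inner n (projector n u) (projector n v)
      = (\<Sum>x<n. \<Sum>y<n. (u x * cnj (v x)) * (cnj (u y) * v y)) / (sqnorm n u * sqnorm n v)"
    unfolding frobenius_inner_def cnj_projector sum_divide_distrib
    by (intro sum.cong refl) (simp add: projector_def mult_ac)
  also have "\<dots> = cnj (\<Sum>x<n. cnj (u x) * v x) * (\<Sum>y<n. cnj (u y) * v y) / (sqnorm n u * sqnorm n v)"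
    by (simp add: sum_product)
  finally show ?thesis using assms by simp
qed

end

lemma hermitian_eigenvectors_orthogonal:
  fixes N :: "nat \<Rightarrow> nat \<Rightarrow> complex"
  assumes herm: "\<And>x y. x < n \<Longrightarrow> y < n \<Longrightarrow> N y x = cnj (N x y)"
    and real: "cnj s = s" and "s \<noteq> 0"
    and u: "\<And>x. x < n \<Longrightarrow> (\<Sum>y<n. N x y * u y) = s * u x"
    and v: "\<And>x. x < n \<Longrightarrow> (\<Sum>y<n. N x y * v y) = - s * v x"
  shows "(\<Sum>x<n. cnj (u x) * v x) = 0"
proof -
  have herm': "cnj (N y x) = N x y" if "x < n" "y < n" for x y
    using herm[OF that] by simp
  let ?uNv = "\<Sum>x<n. cnj (u x) * (\<Sum>y<n. N x y * v y)"
  have "?uNv = (\<Sum>x<n. \<Sum>y<n. cnj (u x) * N x y * v y)"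
    by (simp add: sum_distrib_left mult_ac)
  also have "\<dots> = (\<Sum>y<n. \<Sum>x<n. cnj (u x) * N x y * v y)"
    by (rule sum.swap)
  also have "\<dots> = (\<Sum>y<n. v y * cnj (\<Sum>x<n. N y x * u x))"
    by (intro sum.cong refl) (simp add: sum_distrib_left herm' mult_ac)
  also have "\<dots> = s * (\<Sum>x<n. cnj (u x) * v x)"
    using u real by (simp add: sum_distrib_left mult_ac)
  finally have "?uNv = s * (\<Sum>x<n. cnj (u x) * v x)" .
  moreover have "?uNv = - s * (\<Sum>x<n. cnj (u x) * v x)"
    using v by (simp add: sum_distrib_left mult_ac)
  ultimately have "2 * s * (\<Sum>x<n. cnj (u x) * v x) = 0"
    by (simp add: algebra_simps)
  then show ?thesis using \<open>s \<noteq> 0\<close> by simp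
qed

text \<open>A Hermitian matrix with eigenvalues \<open>\<plusminus>s\<close> and \<open>tr N\<^sup>2 = 2 s\<^sup>2\<close> has no room for
  further nonzero eigenvalues, so it is the rank-two matrix \<open>s P\<^sub>u - s P\<^sub>v\<close>.\<close>
lemma hermitian_spectral_decomposition:
  fixes N :: "nat \<Rightarrow> nat \<Rightarrow> complex"
  assumes herm: "\<And>x y. x < n \<Longrightarrow> y < n \<Longrightarrow> N y x = cnj (N x y)"
    and real: "cnj s = s" and s: "s \<noteq> 0"
    and u: "\<And>x. x < n \<Longrightarrow> (\<Sum>y<n. N x y * u y) = s * u x" and u0: "sqnorm n u \<noteq> 0"
    and v: "\<And>x. x < n \<Longrightarrow> (\<Sum>y<n. N x y * v y) = - s * v x" and v0: "sqnorm n v \<noteq> 0"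
    and trace: "(\<Sum>x<n. \<Sum>y<n. N x y * N y x) = 2 * s * s"
    and "x < n" "y < n"
  shows "N x y = s * projector n u x y - s * projector n v x y"
proof (rule frobenius_inner_combination[OF real, where N = N and U = "projector n u" and V = "projector n v"])
  have "cnj (N x y) = N y x" if "x < n" "y < n" for x y
    using herm[OF that] by simp
  then show "frobenius_inner n N N = 2 * s * s"
    using trace unfolding frobenius_inner_def by simp
  show "frobenius_inner n N (projector n u) = s"
    by (rule frobenius_inner_projector_eigen[OF u0 v0 u])
  show "frobenius_inner n N (projector n v) = - s"
    by (rule frobenius_inner_projector_eigen[OF v0 u0 v])
  show "frobenius_inner n (projector n u) (projector n u) = 1"
    by (rule frobenius_inner_projector_self[OF u0 v0])
  show "frobenius_inner n (projector n v) (projector n v) = 1"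
    by (rule frobenius_inner_projector_self[OF v0 u0])
  show "frobenius_inner n (projector n u) (projector n v) = 0"
    using frobenius_inner_projector_orthogonal[OF u0 v0 hermitian_eigenvectors_orthogonal[OF herm real s u v]] .
qed (use \<open>x < n\<close> \<open>y < n\<close> in auto)

lemma minor3_rank_two:
  assumes "\<forall>x<n. \<forall>y<n. A x y = a x * b y + c x * d y"
    and "i < n" "j < n" "k < n" "l < n" "m < n" "q < n"
  shows "minor3 A i j k l m q = 0"
  unfolding minor3_def using assms by (simp add: algebra_simps)

section \<open>Switching a complete bipartite form\<close>

definition complete_bipartite :: "nat \<Rightarrow> (nat \<Rightarrow> bool) \<Rightarrow> mgraph" where
  "complete_bipartite n \<sigma> = \<lparr>nv = n, und = {(x,y). x < n \<and> y < n \<and> \<sigma> x \<noteq> \<sigma> y}, arc = {}\<rparr>"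

lemma unit_mult_eq_iff:
  assumes "cnj c * c = 1"
  shows "b = cnj c * a \<longleftrightarrow> a = c * b"
proof
  assume "b = cnj c * a"
  then show "a = c * b" using assms by (simp add: mult.assoc[symmetric] mult.commute[of c])
next
  assume "a = c * b"
  then show "b = cnj c * a" using assms by (simp add: mult.assoc[symmetric])
qed

lemma omega_mult_eq_iff: "b = cnj omega * a \<longleftrightarrow> a = omega * b" "b = omega * a \<longleftrightarrow> a = cnj omega * b"
  by (rule unit_mult_eq_iff, simp)
    (use unit_mult_eq_iff[of "cnj omega" b a] in simp)

lemma T6_mult_cnj_eq_iff:
  assumes "t \<in> T6"
  shows "z * cnj t = c \<longleftrightarrow> z = c * t"
proof -
  have "cnj t * t = 1" "t * cnj t = 1" using T6_cnj_mult_self[OF assms] by (simp_all add: mult.commute)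
  then show ?thesis by (auto simp: mult.assoc)
qed

lemma T6_mult_self_neq:
  assumes "b \<in> T6" "c \<noteq> 1"
  shows "b \<noteq> c * b"
  using assms T6_nonzero by simp

context
  fixes G \<sigma> p assumes mg: "mixed_graph G" and form: "complete_bipartite_form G \<sigma> p"
begin

lemma Nent_eq_iff_complete_bipartite_form:
  assumes "x < nv G" "y < nv G" "c \<noteq> 0"
  shows "Nent G x y = c \<longleftrightarrow> \<sigma> x \<noteq> \<sigma> y \<and> p x = c * p y"
  using complete_bipartite_form_Nent[OF form assms(1,2)] assms(3)
    T6_mult_cnj_eq_iff[OF complete_bipartite_form_T6[OF form assms(2)]] by auto

lemma und_iff_complete_bipartite_form:
  "(x,y) \<in> und G \<longleftrightarrow> x < nv G \<and> y < nv G \<and> \<sigma> x \<noteq> \<sigma> y \<and> p x = p y"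
proof -
  have "Nent G x y = 1 \<longleftrightarrow> \<sigma> x \<noteq> \<sigma> y \<and> p x = p y" if "x < nv G" "y < nv G"
    using Nent_eq_iff_complete_bipartite_form[OF that, of 1] by simp
  then show ?thesis using und_iff_Nent[OF mg, of x y] by blast
qed

lemma arc_iff_complete_bipartite_form:
  "(x,y) \<in> arc G \<longleftrightarrow> x < nv G \<and> y < nv G \<and> \<sigma> x \<noteq> \<sigma> y \<and> p x = omega * p y"
  using arc_iff_Nent[OF mg, of x y] Nent_eq_iff_complete_bipartite_form[of x y omega] by auto

lemma complete_bipartite_form_cross:
  assumes "x < nv G" "y < nv G" "\<sigma> x \<noteq> \<sigma> y"
  shows "p x = p y \<or> p x = omega * p y \<or> p y = omega * p x"
proof -
  have "Nent G x y \<noteq> 0"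
    using complete_bipartite_form_Nent[OF form assms(1,2)] assms
      T6_nonzero complete_bipartite_form_T6[OF form] by auto
  then have "Nent G x y = 1 \<or> Nent G x y = omega \<or> Nent G x y = cnj omega"
    using Nent_nonzero_iff[OF mg] Nent_in_N_values[OF mg] unfolding N_values_def by blast
  then have "p x = p y \<or> p x = omega * p y \<or> p x = cnj omega * p y"
    using Nent_eq_iff_complete_bipartite_form[OF assms(1,2)] by auto
  then show ?thesis using omega_mult_eq_iff(2) by blast
qed

lemma switch_to_complete_bipartite:
  "admissible G p" "three_way_switch G p = complete_bipartite (nv G) \<sigma>"
proof -
  note T6 = complete_bipartite_form_T6[OF form]
  note und = und_iff_complete_bipartite_form and arc = arc_iff_complete_bipartite_form
  show "admissible G p"
    unfolding admissible_def using T6 und arc omega_mult_eq_iff(1) by auto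
  have "(x,y) \<in> und (three_way_switch G p) \<longleftrightarrow> x < nv G \<and> y < nv G \<and> \<sigma> x \<noteq> \<sigma> y" for x y
  proof (cases "x < nv G \<and> y < nv G \<and> \<sigma> x \<noteq> \<sigma> y")
    case True
    then consider "p x = p y" | "p x = omega * p y" | "p y = omega * p x"
      using complete_bipartite_form_cross by blast
    then show ?thesis
      by cases (use True in \<open>auto simp: three_way_switch_def und arc omega_mult_eq_iff(1)\<close>)
  qed (auto simp: three_way_switch_def und arc)
  then have "und (three_way_switch G p) = {(x,y). x < nv G \<and> y < nv G \<and> \<sigma> x \<noteq> \<sigma> y}"
    by auto
  moreover have "arc (three_way_switch G p) = {}"
    unfolding three_way_switch_def using und arc T6 omega_mult_eq_iff(1)
      T6_mult_self_neq[of _ omega] T6_mult_self_neq[of _ "cnj omega"]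
    by (auto simp: mult.assoc[symmetric] omega_mult_omega)
  ultimately show "three_way_switch G p = complete_bipartite (nv G) \<sigma>"
    unfolding complete_bipartite_def by (simp add: three_way_switch_def)
qed

lemma switch_from_complete_bipartite:
  "admissible (complete_bipartite (nv G) \<sigma>) (\<lambda>x. cnj (p x))"
  "three_way_switch (complete_bipartite (nv G) \<sigma>) (\<lambda>x. cnj (p x)) = G"
proof -
  note T6 = complete_bipartite_form_T6[OF form]
  have cnj_eq: "cnj (p y) = c * cnj (p x) \<longleftrightarrow> p y = cnj c * p x" for x y c
    by (metis complex_cnj_cnj complex_cnj_mult)
  have "cnj (p y) = cnj (p x) \<or> cnj (p y) = omega * cnj (p x) \<or> cnj (p x) = omega * cnj (p y)"
    if "x < nv G" "y < nv G" "\<sigma> x \<noteq> \<sigma> y" for x y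
    using complete_bipartite_form_cross[OF that] cnj_eq omega_mult_eq_iff(1) by auto
  then show "admissible (complete_bipartite (nv G) \<sigma>) (\<lambda>x. cnj (p x))"
    unfolding admissible_def complete_bipartite_def using T6 T6_cnj by auto
  show "three_way_switch (complete_bipartite (nv G) \<sigma>) (\<lambda>x. cnj (p x)) = G"
  proof (rule mgraph.equality)
    show "und (three_way_switch (complete_bipartite (nv G) \<sigma>) (\<lambda>x. cnj (p x))) = und G"
      unfolding three_way_switch_def complete_bipartite_def
      using und_iff_complete_bipartite_form by auto
    show "arc (three_way_switch (complete_bipartite (nv G) \<sigma>) (\<lambda>x. cnj (p x))) = arc G"
      unfolding three_way_switch_def complete_bipartite_def
      using arc_iff_complete_bipartite_form cnj_eq omega_mult_eq_iff(1) by auto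
  qed (simp_all add: three_way_switch_def complete_bipartite_def)
qed

end

lemma complete_bipartite_negate: "complete_bipartite n (\<lambda>x. \<not> \<sigma> x) = complete_bipartite n \<sigma>"
  unfolding complete_bipartite_def by auto

lemma card_sides: "card {x. x < n \<and> \<sigma> x} + card {x. x < n \<and> \<not> \<sigma> x} = (n::nat)"
proof -
  have "card {x. x < n \<and> \<sigma> x} + card {x. x < n \<and> \<not> \<sigma> x} = card ({x. x < n \<and> \<sigma> x} \<union> {x. x < n \<and> \<not> \<sigma> x})"
    by (rule card_Un_disjoint[symmetric]) auto
  also have "{x. x < n \<and> \<sigma> x} \<union> {x. x < n \<and> \<not> \<sigma> x} = {..<n}" by auto
  finally show ?thesis by simp
qed

lemma complete_bipartite_isomorphic:
  assumes card: "card {x. x < n \<and> \<sigma> x} = card {x. x < n \<and> \<tau> x}"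
  shows "isomorphic_mg (complete_bipartite n \<sigma>) (complete_bipartite n \<tau>)"
proof -
  let ?A = "{x. x < n \<and> \<sigma> x}" and ?A' = "{x. x < n \<and> \<tau> x}"
  let ?B = "{x. x < n \<and> \<not> \<sigma> x}" and ?B' = "{x. x < n \<and> \<not> \<tau> x}"
  have "card ?B = card ?B'" using card card_sides[of n \<sigma>] card_sides[of n \<tau>] by simp
  then obtain h where h: "bij_betw h ?B ?B'" using finite_same_card_bij[of ?B ?B'] by auto
  obtain g where g: "bij_betw g ?A ?A'" using finite_same_card_bij[OF _ _ card] by auto
  define f where "f x = (if \<sigma> x then g x else h x)" for x
  have "bij_betw f ?A ?A' = bij_betw g ?A ?A'" "bij_betw f ?B ?B' = bij_betw h ?B ?B'"
    by (rule bij_betw_cong, simp add: f_def)+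
  then have fA: "bij_betw f ?A ?A'" and fB: "bij_betw f ?B ?B'" using g h by simp_all
  have "bij_betw f (?A \<union> ?B) (?A' \<union> ?B')" by (rule bij_betw_combine[OF fA fB]) auto
  moreover have "?A \<union> ?B = {..<n}" "?A' \<union> ?B' = {..<n}" by auto
  ultimately have f: "bij_betw f {..<n} {..<n}" by simp
  have "f x < n \<and> \<tau> (f x) = \<sigma> x" if "x < n" for x
    using that bij_betwE[OF fA] bij_betwE[OF fB] by (cases "\<sigma> x") auto
  then show ?thesis
    unfolding isomorphic_mg_def complete_bipartite_def
    by (intro conjI exI[of _ f]) (use f in auto)
qed

lemma same_sum_and_product:
  assumes "a + b = (n::nat)" "a' + b' = n" "a * b = a' * b'"
  shows "a' = a \<or> a' = b"
proof -
  have sum: "int a + int b = int a' + int b'" and prod: "int a * int b = int a' * int b'"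
    using assms by (simp_all flip: of_nat_add of_nat_mult)
  have "(int a' - int a) * (int a' - int b) = int a' * int a' - int a' * (int a + int b) + int a * int b"
    by (simp add: algebra_simps)
  also have "\<dots> = 0" unfolding sum prod by (simp add: algebra_simps)
  finally show ?thesis by simp
qed

lemma eigenvalue_Nmat_eigenvector:
  assumes "eigenvalue (Nmat G) e"
  obtains u where "\<And>x. x < nv G \<Longrightarrow> (\<Sum>y<nv G. Nent G x y * u y) = e * u x" "sqnorm (nv G) u \<noteq> 0"
proof -
  obtain w where "eigenvector (Nmat G) w e" using assms unfolding eigenvalue_def by blast
  then have w: "dim_vec w = nv G" "w \<noteq> 0\<^sub>v (nv G)" "Nmat G *\<^sub>v w = e \<cdot>\<^sub>v w"
    unfolding eigenvector_def using Nmat_carrier[of G] by auto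
  have "(\<Sum>y<nv G. Nent G x y * w $ y) = e * w $ x" if "x < nv G" for x
    using Nmat_mult_vec_index[OF that w(1)] arg_cong[OF w(3), of "\<lambda>v. v $ x"] that w(1) by simp
  moreover obtain x where "x < nv G" "w $ x \<noteq> 0"
    using w(1,2) by (metis eq_vecI index_zero_vec)
  then have "sqnorm (nv G) (\<lambda>x. w $ x) \<noteq> 0" by (rule sqnorm_nonzero)
  ultimately show thesis using that[of "\<lambda>x. w $ x"] by blast
qed

lemma cospectral_minors3_vanish:
  assumes mgH: "mixed_graph H" and nv: "nv H = nv G"
    and cp: "char_poly (Nmat G) = char_poly (Nmat H)"
    and form: "complete_bipartite_form G \<sigma> p"
    and sides: "\<exists>x<nv G. \<sigma> x" "\<exists>x<nv G. \<not> \<sigma> x"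
  shows "minors3_vanish H"
proof -
  let ?ab = "card {y. y < nv G \<and> \<sigma> y} * card {y. y < nv G \<and> \<not> \<sigma> y}"
  define s where "s = complex_of_real (sqrt (real ?ab))"
  have "eigenvalue (Nmat G) s" "eigenvalue (Nmat G) (- s)"
    using complete_bipartite_form_eigenvalue[OF form sides, of 1]
      complete_bipartite_form_eigenvalue[OF form sides, of "-1"] unfolding s_def by simp_all
  then have evH: "eigenvalue (Nmat H) s" "eigenvalue (Nmat H) (- s)"
    using cp eigenvalue_root_char_poly[OF Nmat_carrier[of G]] eigenvalue_root_char_poly[OF Nmat_carrier[of H]]
    by simp_all
  obtain u where
    u: "\<And>x. x < nv H \<Longrightarrow> (\<Sum>y<nv H. Nent H x y * u y) = s * u x" "sqnorm (nv H) u \<noteq> 0"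
    using eigenvalue_Nmat_eigenvector[OF evH(1)] by blast
  obtain v where
    v: "\<And>x. x < nv H \<Longrightarrow> (\<Sum>y<nv H. Nent H x y * v y) = - s * v x" "sqnorm (nv H) v \<noteq> 0"
    using eigenvalue_Nmat_eigenvector[OF evH(2)] by blast
  have "s * s = complex_of_real (real ?ab)" unfolding s_def by (simp flip: of_real_mult)
  then have s: "s \<noteq> 0" "cnj s = s" "s * s = of_nat ?ab"
    unfolding s_def using sides by auto
  have "(\<Sum>x<nv H. \<Sum>y<nv H. Nent H x y * Nent H y x) = trace_mat (Nmat G * Nmat G)"
    using char_poly_eq_trace_mat_square_eq[OF Nmat_carrier Nmat_carrier[of H, unfolded nv] cp]
    unfolding trace_mat_square_Nmat by simp
  also have "\<dots> = 2 * s * s" using complete_bipartite_form_trace[OF form] s(3) by simp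
  finally have "\<forall>x<nv H. \<forall>y<nv H.
      Nent H x y = s * projector (nv H) u x y - s * projector (nv H) v x y"
    using hermitian_spectral_decomposition[OF Nent_hermitian[OF mgH] s(2,1) u(1,2) v(1,2)] by blast
  then have rank_two: "\<forall>x<nv H. \<forall>y<nv H. Nent H x y
      = (s * u x / sqnorm (nv H) u) * cnj (u y) + (- s * v x / sqnorm (nv H) v) * cnj (v y)"
    unfolding projector_def by (simp add: algebra_simps)
  show ?thesis unfolding minors3_vanish_def by (blast intro: minor3_rank_two[OF rank_two])
qed

lemma complete_bipartite_form_switching_equivalent:
  assumes mgG: "mixed_graph G" and mgH: "mixed_graph H" and nv: "nv G = nv H"
    and formG: "complete_bipartite_form G \<sigma> p" and formH: "complete_bipartite_form H \<tau> q"
    and edges: "card {x. x < nv G \<and> \<sigma> x} * card {x. x < nv G \<and> \<not> \<sigma> x}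
      = card {x. x < nv G \<and> \<tau> x} * card {x. x < nv G \<and> \<not> \<tau> x}"
  shows "switching_equivalent G H"
proof -
  have "card {x. x < nv G \<and> \<tau> x} = card {x. x < nv G \<and> \<sigma> x} \<or>
        card {x. x < nv G \<and> \<tau> x} = card {x. x < nv G \<and> \<not> \<sigma> x}"
    by (rule same_sum_and_product[OF card_sides card_sides edges])
  then have "isomorphic_mg (complete_bipartite (nv G) \<sigma>) (complete_bipartite (nv G) \<tau>)"
  proof
    assume "card {x. x < nv G \<and> \<tau> x} = card {x. x < nv G \<and> \<not> \<sigma> x}"
    then have "isomorphic_mg (complete_bipartite (nv G) (\<lambda>x. \<not> \<sigma> x)) (complete_bipartite (nv G) \<tau>)"
      by (intro complete_bipartite_isomorphic) simp
    then show ?thesis unfolding complete_bipartite_negate .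
  qed (intro complete_bipartite_isomorphic, simp)
  then have step2: "switch_step (complete_bipartite (nv G) \<sigma>) (complete_bipartite (nv H) \<tau>)"
    unfolding switch_step_def nv by (rule disjI1)
  have step1: "switch_step G (complete_bipartite (nv G) \<sigma>)"
    unfolding switch_step_def using switch_to_complete_bipartite[OF mgG formG]
    by (intro disjI2 disjI1 exI[of _ p]) simp
  have step3: "switch_step (complete_bipartite (nv H) \<tau>) H"
    unfolding switch_step_def using switch_from_complete_bipartite[OF mgH formH]
    by (intro disjI2 disjI1 exI[of _ "\<lambda>x. cnj (q x)"]) simp
  show ?thesis
    unfolding switching_equivalent_def
    using step1 step2 step3 by (meson rtranclp.rtrancl_into_rtrancl r_into_rtranclp)
qed

theorem theorem5p10:
  fixes G H :: mgraph
  assumes "mixed_graph G" and "connected_mg G" and "rank_N G = 2"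
    and "mixed_graph H" and "connected_mg H" and "cospectral G H"
  shows "switching_equivalent G H"
proof -
  have n: "2 \<le> nv G"
    using assms(3) vec_space.rank_le_nc[OF Nmat_carrier[of G]] unfolding rank_N_def by simp
  obtain \<sigma> p where formG: "complete_bipartite_form G \<sigma> p"
    using minors3_vanish_complete_bipartite_form[OF assms(1) rank_N_le_2_minors3_vanish assms(2) n]
    using assms(3) by auto
  have sides: "\<exists>x<nv G. \<sigma> x" "\<exists>x<nv G. \<not> \<sigma> x"
    using complete_bipartite_form_sides[OF assms(1,2) n formG] by auto
  have nv: "nv G = nv H" and cp: "char_poly (Nmat G) = char_poly (Nmat H)"
    using cospectral_char_poly_eq[OF assms(6)] by auto
  have "minors3_vanish H" by (rule cospectral_minors3_vanish[OF assms(4) nv[symmetric] cp formG sides])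
  then obtain \<tau> q where formH: "complete_bipartite_form H \<tau> q"
    using minors3_vanish_complete_bipartite_form[OF assms(4) _ assms(5)] n nv by auto
  have "trace_mat (Nmat G * Nmat G) = trace_mat (Nmat H * Nmat H)"
    using char_poly_eq_trace_mat_square_eq[OF Nmat_carrier Nmat_carrier[of H, folded nv] cp] .
  then have "card {x. x < nv G \<and> \<sigma> x} * card {x. x < nv G \<and> \<not> \<sigma> x}
      = card {x. x < nv G \<and> \<tau> x} * card {x. x < nv G \<and> \<not> \<tau> x}"
    unfolding complete_bipartite_form_trace[OF formG] complete_bipartite_form_trace[OF formH] nv
    by (simp only: mult_cancel_left of_nat_eq_iff) simp
  then show ?thesis
    by (rule complete_bipartite_form_switching_equivalent[OF assms(1,4) nv formG formH])
qed

end
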